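(* Let $V$ be an indecomposable Whittaker module of type $\eta$ over $R$ with cyclic Whittaker vector $w$, and suppose $Z_V=(p(\Omega)^n)$ where $p$ is an irreducible polynomial and $n\ge 1$. Then every submodule $V'\subseteq V$ is of the form $V'=Rp(\Omega)^iw$ for some $i\in\{0,\dots,n\}$.
   Context: Let $f\in\mathbb{C}[H]$ be a polynomial. $R=R(f)$ is the associative $\mathbb{C}$-algebra generated by $E,F,H$ with relations $EF-FE=f(H)$, $HE-EH=E$, $HF-FH=-F$. Let $u\in\mathbb{C}[H]$ satisfy $f(H)=\tfrac12(u(H+1)-u(H))$ and $\Omega=2FE+u(H+1)$; the center $Z(R)$ is the polynomial ring $\mathbb{C}[\Omega]$. Let $R(E)=\mathbb{C}[E]$ and fix an algebra homomorphism $\eta:R(E)\to\mathbb{C}$ with $\eta(E)\neq0$. A vector $v$ of an $R$-module $V$ is a Whittaker vector of type $\eta$ if $Ev=\eta(E)v$; $V$ is a Whittaker module of type $\eta$ with cyclic Whittaker vector $w$ if $w$ is a Whittaker vector and $V=Rw$. $Z_V=\mathrm{Ann}_R(V)\cap Z(R)$. *)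

theory Defs
  imports Complex_Main "HOL-Computational_Algebra.Polynomial"
begin

text \<open>An R(f)-module structure on it is given by the action of the generators E, F, H as linear maps.\<close>

definition poly_op :: "(complex \<Rightarrow> 'v \<Rightarrow> 'v) \<Rightarrow> complex poly \<Rightarrow> ('v \<Rightarrow> 'v) \<Rightarrow> 'v \<Rightarrow> 'v::ab_group_add"
  where "poly_op sc q T v = (\<Sum>k\<le>degree q. sc (coeff q k) ((T ^^ k) v))"

definition is_R_module ::
  "(complex \<Rightarrow> 'v::ab_group_add \<Rightarrow> 'v) \<Rightarrow> complex poly \<Rightarrow> ('v \<Rightarrow> 'v) \<Rightarrow> ('v \<Rightarrow> 'v) \<Rightarrow> ('v \<Rightarrow> 'v) \<Rightarrow> bool"
  where "is_R_module sc fp E F H \<longleftrightarrow>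
     vector_space sc \<and>
     Vector_Spaces.linear sc sc E \<and> Vector_Spaces.linear sc sc F \<and> Vector_Spaces.linear sc sc H \<and>
     (\<forall>v. E (F v) - F (E v) = poly_op sc fp H v) \<and>
     (\<forall>v. H (E v) - E (H v) = E v) \<and>
     (\<forall>v. H (F v) - F (H v) = - F v)"

text \<open>R-submodules: subspaces stable under E, F, H (R is generated by E, F, H).\<close>
definition is_submodule ::
  "(complex \<Rightarrow> 'v \<Rightarrow> 'v) \<Rightarrow> ('v \<Rightarrow> 'v) \<Rightarrow> ('v \<Rightarrow> 'v) \<Rightarrow> ('v \<Rightarrow> 'v) \<Rightarrow> 'v::ab_group_add set \<Rightarrow> bool"
  where "is_submodule sc E F H S \<longleftrightarrow> module.subspace sc S \<and> E ` S \<subseteq> S \<and> F ` S \<subseteq> S \<and> H ` S \<subseteq> S"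

definition gen_submodule ::
  "(complex \<Rightarrow> 'v \<Rightarrow> 'v) \<Rightarrow> ('v \<Rightarrow> 'v) \<Rightarrow> ('v \<Rightarrow> 'v) \<Rightarrow> ('v \<Rightarrow> 'v) \<Rightarrow> 'v::ab_group_add set \<Rightarrow> 'v set"
  where "gen_submodule sc E F H X = \<Inter>{S. is_submodule sc E F H S \<and> X \<subseteq> S}"

definition Omega_op ::
  "(complex \<Rightarrow> 'v \<Rightarrow> 'v) \<Rightarrow> complex poly \<Rightarrow> ('v \<Rightarrow> 'v) \<Rightarrow> ('v \<Rightarrow> 'v) \<Rightarrow> ('v \<Rightarrow> 'v) \<Rightarrow> 'v \<Rightarrow> 'v::ab_group_add"
  where "Omega_op sc u E F H v = sc 2 (F (E v)) + poly_op sc (pcompose u [:1, 1:]) H v"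

definition indecomposable ::
  "(complex \<Rightarrow> 'v \<Rightarrow> 'v) \<Rightarrow> ('v \<Rightarrow> 'v) \<Rightarrow> ('v \<Rightarrow> 'v) \<Rightarrow> ('v \<Rightarrow> 'v) \<Rightarrow> 'v::ab_group_add itself \<Rightarrow> bool"
  where "indecomposable sc E F H _ \<longleftrightarrow> (UNIV :: 'v set) \<noteq> {0} \<and>
     (\<forall>A B. is_submodule sc E F H A \<and> is_submodule sc E F H B \<and> A \<inter> B = {0} \<and>
        {a + b | a b. a \<in> A \<and> b \<in> B} = UNIV \<longrightarrow> A = {0} \<or> B = {0})"

end

(* Write X = E - eta.  Since Omega is central, every q(Omega) w is a Whittaker vector, and
   applying the polynomials binom(H + j, j) to these vectors yields an exhausting filtration
   W 0, W 1, ... of V with W 0 = C[Omega] w on which X lowers the filtration degree.  Hence if X v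
   lies in a submodule U, then v is congruent to some q(Omega) w modulo U.  For a submodule V', the
   polynomials q with q(Omega) w in V' form an ideal containing p^n, i.e. the ideal (p^i) for some
   i <= n; descending along powers of X then shows that V' is generated by p(Omega)^i w. *)

theory Submission
  imports
    Defs
    "HOL-Computational_Algebra.Polynomial_Factorial"
    "HOL-Computational_Algebra.Field_as_Ring"
begin

section \<open>Ideals containing a power of an irreducible element\<close>

lemma ideal_containing_prime_power:
  fixes I :: "'a::{euclidean_ring_gcd, factorial_semiring_multiplicative} set"
  assumes add_closed: "\<And>a b. a \<in> I \<Longrightarrow> b \<in> I \<Longrightarrow> a + b \<in> I"
    and mult_closed: "\<And>a b. b \<in> I \<Longrightarrow> a * b \<in> I"
    and "irreducible p" and "p ^ n \<in> I"
  shows "\<exists>i\<le>n. I = {q. p ^ i dvd q}"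
proof -
  define i where "i = (LEAST i. p ^ i \<in> I)"
  have pi: "p ^ i \<in> I" and "i \<le> n"
    using \<open>p ^ n \<in> I\<close> unfolding i_def by (auto intro: LeastI Least_le)
  have "p ^ i dvd q" if "q \<in> I" for q
  proof -
    define g where "g = gcd q (p ^ i)"
    have "g \<in> I"
      unfolding g_def bezout_coefficients_fst_snd [symmetric] using that pi
      by (intro add_closed mult_closed)
    have prime: "prime (normalize p)"
      using \<open>irreducible p\<close> by (simp add: prime_elem_iff_irreducible)
    have "g dvd normalize p ^ i"
      by (simp add: g_def flip: normalize_power)
    then obtain m where "m \<le> i" and "normalize g = normalize p ^ m"
      using divides_primepow [OF prime] by blast
    then have "normalize g = normalize (p ^ m)"
      by (simp add: normalize_power)
    then have "p ^ m dvd g" and "g dvd p ^ m"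
      by (auto intro: associatedD1 associatedD2)
    from \<open>g dvd p ^ m\<close> obtain k where "p ^ m = k * g"
      by (metis dvdE mult.commute)
    then have "p ^ m \<in> I"
      using mult_closed [OF \<open>g \<in> I\<close>] by simp
    then have "m = i"
      using \<open>m \<le> i\<close> unfolding i_def by (simp add: Least_le le_antisym)
    then show ?thesis
      using \<open>p ^ m dvd g\<close> by (simp add: g_def)
  qed
  moreover have "q \<in> I" if "p ^ i dvd q" for q
    using that mult_closed [OF pi] by (auto elim!: dvdE simp: mult.commute)
  ultimately show ?thesis
    using \<open>i \<le> n\<close> by blast
qed

section \<open>Polynomials in a linear operator\<close>

locale complex_vector_space = vector_space sc for sc :: "complex \<Rightarrow> 'v::ab_group_add \<Rightarrow> 'v"

sublocale complex_vector_space \<subseteq> pair: vector_space_pair sc sc ..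

context complex_vector_space
begin

abbreviation endo :: "('v \<Rightarrow> 'v) \<Rightarrow> bool" where
  "endo T \<equiv> Vector_Spaces.linear sc sc T"

lemma linear_funpow: "endo T \<Longrightarrow> endo (T ^^ k)"
  by (induction k) (simp_all add: linear_id Vector_Spaces.linear_compose)

lemma span_linear_into_subspace:
  assumes "endo T" and "subspace P" and "\<And>x. x \<in> B \<Longrightarrow> T x \<in> P" and "v \<in> span B"
  shows "T v \<in> P"
  using span_minimal [of B "T -` P"] pair.linear_subspace_vimage [OF assms(1,2)] assms(3,4)
  by auto

lemma poly_op_eq_sum:
  "degree q \<le> N \<Longrightarrow> poly_op sc q T v = (\<Sum>k\<le>N. sc (coeff q k) ((T ^^ k) v))"
  unfolding poly_op_def by (rule sum.mono_neutral_left) (auto simp: coeff_eq_0)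

lemma poly_op_0 [simp]: "poly_op sc 0 T v = 0"
  by (simp add: poly_op_def)

lemma poly_op_const [simp]: "poly_op sc [:c:] T v = sc c v"
  by (simp add: poly_op_def)

lemma poly_op_1 [simp]: "poly_op sc 1 T v = v"
  by (simp add: poly_op_def)

lemma poly_op_add: "poly_op sc (p + q) T v = poly_op sc p T v + poly_op sc q T v"
proof -
  let ?N = "max (degree p) (degree q)"
  have "poly_op sc (p + q) T v = (\<Sum>k\<le>?N. sc (coeff (p + q) k) ((T ^^ k) v))"
    by (rule poly_op_eq_sum) (simp add: degree_add_le)
  also have "\<dots> = poly_op sc p T v + poly_op sc q T v"
    by (simp add: poly_op_eq_sum [of _ ?N] scale_left_distrib sum.distrib)
  finally show ?thesis .
qed

lemma poly_op_smult: "poly_op sc (smult c q) T v = sc c (poly_op sc q T v)"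
  by (simp add: poly_op_eq_sum [of "smult c q" "degree q"] poly_op_def scale_sum_right)

lemma poly_op_diff: "poly_op sc (p - q) T v = poly_op sc p T v - poly_op sc q T v"
  using poly_op_add [of p "- q"] poly_op_smult [of "-1" q] by simp

lemma poly_op_pCons:
  assumes "endo T"
  shows "poly_op sc (pCons a q) T v = sc a v + T (poly_op sc q T v)"
proof -
  have "poly_op sc (pCons a q) T v = (\<Sum>k\<le>Suc (degree q). sc (coeff (pCons a q) k) ((T ^^ k) v))"
    by (rule poly_op_eq_sum) (simp add: degree_pCons_le)
  also have "\<dots> = sc a v + (\<Sum>k\<le>degree q. sc (coeff q k) ((T ^^ Suc k) v))"
    by (subst sum.atMost_Suc_shift) simp
  also have "(\<Sum>k\<le>degree q. sc (coeff q k) ((T ^^ Suc k) v)) = T (poly_op sc q T v)"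
    by (simp add: poly_op_def pair.linear_sum [OF assms] pair.linear_scale [OF assms])
  finally show ?thesis .
qed

lemma poly_op_var: "endo T \<Longrightarrow> poly_op sc [:0, 1:] T v = T v"
  by (simp add: poly_op_pCons)

lemma linear_poly_op: "endo T \<Longrightarrow> endo (poly_op sc q T)"
  unfolding poly_op_def [abs_def]
  by (auto intro!: pair.linear_compose_sum pair.linear_compose_scale_right linear_funpow)

lemma poly_op_mult:
  "endo T \<Longrightarrow> poly_op sc (p * q) T v = poly_op sc p T (poly_op sc q T v)"
  by (induction p) (simp_all add: poly_op_add poly_op_smult poly_op_pCons)

lemma poly_op_commute:
  assumes "endo A" and "endo T" and "endo S" and "\<And>x. A (T x) = S (A x)"
  shows "A (poly_op sc q T v) = poly_op sc q S (A v)"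
  by (induction q)
    (simp_all add: poly_op_pCons assms pair.linear_0 [OF assms(1)] pair.linear_add [OF assms(1)]
      pair.linear_scale [OF assms(1)])

lemma poly_op_pcompose:
  "endo T \<Longrightarrow> poly_op sc (pcompose p r) T v = poly_op sc p (poly_op sc r T) v"
  by (induction p)
    (simp_all add: pcompose_pCons poly_op_add poly_op_mult poly_op_pCons linear_poly_op)

lemma poly_op_in_subspace:
  assumes "subspace S" and "endo T" and "\<And>x. x \<in> S \<Longrightarrow> T x \<in> S" and "v \<in> S"
  shows "poly_op sc q T v \<in> S"
  by (induction q) (simp_all add: poly_op_pCons assms subspace_0 subspace_add subspace_scale)

lemma submodule_subspace: "is_submodule sc E F H S \<Longrightarrow> subspace S"
  by (simp add: is_submodule_def)

lemma submodule_closed: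
  assumes "is_submodule sc E F H S" and "x \<in> S"
  shows "E x \<in> S" and "F x \<in> S" and "H x \<in> S"
  using assms by (auto simp: is_submodule_def)

lemma submodule_gen_submodule: "is_submodule sc E F H (gen_submodule sc E F H A)"
  unfolding gen_submodule_def is_submodule_def
  by (intro conjI subspace_Inter) blast+

lemma gen_submodule_least: "is_submodule sc E F H S \<Longrightarrow> A \<subseteq> S \<Longrightarrow> gen_submodule sc E F H A \<subseteq> S"
  unfolding gen_submodule_def by blast

lemma gen_submodule_superset: "A \<subseteq> gen_submodule sc E F H A"
  unfolding gen_submodule_def by blast

end

section \<open>The Casimir element\<close>

locale R_module =
  fixes sc :: "complex \<Rightarrow> 'v::ab_group_add \<Rightarrow> 'v" and fp :: "complex poly"
    and E F H :: "'v \<Rightarrow> 'v"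
  assumes R_module: "is_R_module sc fp E F H"

sublocale R_module \<subseteq> complex_vector_space sc
  using R_module by (simp add: is_R_module_def complex_vector_space_def)

context R_module
begin

lemma linear_E: "endo E" and linear_F: "endo F" and linear_H: "endo H"
  using R_module by (simp_all add: is_R_module_def)

lemma E_F_swap: "E (F v) = F (E v) + poly_op sc fp H v"
  using R_module by (simp add: is_R_module_def algebra_simps)

lemma E_H_swap: "E (H v) = H (E v) - E v"
  using R_module by (simp add: is_R_module_def algebra_simps)

lemma F_H_swap: "F (H v) = H (F v) + F v"
  using R_module by (simp add: is_R_module_def algebra_simps)

lemma E_poly_H: "E (poly_op sc g H v) = poly_op sc (pcompose g [:-1, 1:]) H (E v)"
proof -
  have "E (H x) = poly_op sc [:-1, 1:] H (E x)" for x
    by (simp add: poly_op_pCons linear_H E_H_swap)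
  then show ?thesis
    by (simp add: poly_op_pcompose linear_H
        poly_op_commute [OF linear_E linear_H linear_poly_op [OF linear_H]])
qed

lemma F_poly_H: "F (poly_op sc g H v) = poly_op sc (pcompose g [:1, 1:]) H (F v)"
proof -
  have "F (H x) = poly_op sc [:1, 1:] H (F x)" for x
    by (simp add: poly_op_pCons linear_H F_H_swap add.commute)
  then show ?thesis
    by (simp add: poly_op_pcompose linear_H
        poly_op_commute [OF linear_F linear_H linear_poly_op [OF linear_H]])
qed

end

locale R_module_Casimir = R_module +
  fixes u :: "complex poly"
  assumes fp_eq: "fp = smult (1/2) (pcompose u [:1, 1:] - u)"
begin

abbreviation \<Omega> where
  "\<Omega> \<equiv> Omega_op sc u E F H"

lemma Omega_eq: "\<Omega> v = sc 2 (F (E v)) + poly_op sc (pcompose u [:1, 1:]) H v"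
  by (simp add: Omega_op_def)

lemma linear_Omega: "endo \<Omega>"
proof -
  have "endo (\<lambda>v. sc 2 (F (E v)))"
    using Vector_Spaces.linear_compose [OF linear_E linear_F]
    by (intro pair.linear_compose_scale_right) (simp add: comp_def)
  then show ?thesis
    unfolding Omega_op_def [abs_def]
    by (intro pair.linear_compose_add linear_poly_op linear_H)
qed

lemma Omega_H_commute: "\<Omega> (H v) = H (\<Omega> v)"
proof -
  have "H (F (E v)) = F (E (H v))"
    by (simp add: E_H_swap F_H_swap pair.linear_diff [OF linear_F])
  then show ?thesis
    using poly_op_commute [OF linear_H linear_H linear_H]
    by (simp add: Omega_eq pair.linear_add [OF linear_H] pair.linear_scale [OF linear_H])
qed

lemma Omega_E_commute: "\<Omega> (E v) = E (\<Omega> v)"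
proof -
  (* Moving E to the right turns u(H + 1) into u(H); the difference 2 fp(H) is exactly what
     the relation EF = FE + fp(H) contributes. *)
  have u: "pcompose (pcompose u [:1, 1:]) [:-1, 1:] = u"
    by (simp add: pcompose_assoc [symmetric] pcompose_pCons)
  have "E (\<Omega> v) = sc 2 (E (F (E v))) + poly_op sc u H (E v)"
    by (simp add: Omega_eq pair.linear_add [OF linear_E] pair.linear_scale [OF linear_E] E_poly_H u)
  also have "\<dots> = sc 2 (F (E (E v))) + (poly_op sc (smult 2 fp) H (E v) + poly_op sc u H (E v))"
    by (simp add: E_F_swap scale_right_distrib poly_op_smult)
  also have "\<dots> = \<Omega> (E v)"
    by (simp add: fp_eq poly_op_diff Omega_eq)
  finally show ?thesis by simp
qed

lemma Omega_F_commute: "\<Omega> (F v) = F (\<Omega> v)"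
proof -
  have u: "pcompose (pcompose u [:1, 1:]) [:1, 1:]
      = smult 2 (pcompose fp [:1, 1:]) + pcompose u [:1, 1:]"
    by (simp add: fp_eq pcompose_diff pcompose_smult pcompose_assoc [symmetric] pcompose_pCons)
  have "F (\<Omega> v)
      = sc 2 (F (F (E v))) + poly_op sc (pcompose (pcompose u [:1, 1:]) [:1, 1:]) H (F v)"
    by (simp add: Omega_eq pair.linear_add [OF linear_F] pair.linear_scale [OF linear_F] F_poly_H)
  also have "\<dots>
      = sc 2 (F (F (E v))) + sc 2 (F (poly_op sc fp H v)) + poly_op sc (pcompose u [:1, 1:]) H (F v)"
    by (simp add: u poly_op_add poly_op_smult F_poly_H add.assoc)
  also have "\<dots> = \<Omega> (F v)"
    by (simp add: Omega_eq E_F_swap pair.linear_add [OF linear_F] scale_right_distrib)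
  finally show ?thesis by simp
qed

lemma submodule_poly_Omega:
  assumes "is_submodule sc E F H S" and "x \<in> S"
  shows "poly_op sc c \<Omega> x \<in> S"
proof (rule poly_op_in_subspace [OF submodule_subspace [OF assms(1)] linear_Omega _ assms(2)])
  fix y assume "y \<in> S"
  then have "poly_op sc (pcompose u [:1, 1:]) H y \<in> S"
    by (intro poly_op_in_subspace [OF submodule_subspace [OF assms(1)] linear_H])
      (auto intro: submodule_closed [OF assms(1)])
  with \<open>y \<in> S\<close> show "\<Omega> y \<in> S"
    using submodule_subspace [OF assms(1)]
    by (simp add: Omega_eq submodule_closed [OF assms(1)] subspace_add subspace_scale)
qed

end

section \<open>Cyclic Whittaker modules\<close>

locale Whittaker_module = R_module_Casimir +
  fixes eta :: complex and w
  assumes eta_nonzero: "eta \<noteq> 0"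
    and Whittaker_vector: "E w = sc eta w"
    and cyclic: "gen_submodule sc E F H {w} = UNIV"
begin

definition X where "X v = E v - sc eta v"

text \<open>\<open>Y j\<close> is the binomial polynomial \<open>(H + 1) (H + 2) \<dots> (H + j) / j!\<close>; on Whittaker
  vectors \<open>X\<close> lowers its index (lemma \<open>X_Y\<close>).\<close>
primrec Y :: "nat \<Rightarrow> 'a \<Rightarrow> 'a" where
  "Y 0 z = z"
| "Y (Suc j) z = sc (1 / of_nat (Suc j)) (H (Y j z) + sc (of_nat (Suc j)) (Y j z))"

declare Y.simps(2) [simp del]

definition Zw where "Zw c = poly_op sc c \<Omega> w"

definition W where "W k = span {Y j (Zw c) | j c. j \<le> k}"

lemma linear_X: "endo X"
  unfolding X_def [abs_def] by (intro pair.linear_compose_sub linear_E linear_scale_self)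

lemma X_H_swap: "X (H v) = H (X v) - X v - sc eta v"
  by (simp add: X_def E_H_swap pair.linear_diff [OF linear_H] pair.linear_scale [OF linear_H]
      algebra_simps)

lemma linear_Y: "endo (Y j)"
proof (induction j)
  case (Suc j)
  have "Y (Suc j) = (\<lambda>z. sc (1 / of_nat (Suc j)) (H (Y j z) + sc (of_nat (Suc j)) (Y j z)))"
    by (simp add: Y.simps fun_eq_iff)
  with Suc show ?case
    using Vector_Spaces.linear_compose [OF Suc linear_H]
    by (simp add: comp_def pair.linear_compose_scale_right pair.linear_compose_add)
qed (simp add: linear_ident)

lemma H_Y: "H (Y j z) = sc (of_nat (Suc j)) (Y (Suc j) z) - sc (of_nat (Suc j)) (Y j z)"
  by (simp add: Y.simps del: of_nat_Suc)

lemma X_Y: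
  assumes "X z = 0"
  shows "X (Y (Suc j) z) = sc (- eta) (Y j z)"
proof (induction j)
  case 0
  show ?case
    using assms
    by (simp add: Y.simps pair.linear_add [OF linear_X] pair.linear_scale [OF linear_X] X_H_swap
        pair.linear_0 [OF linear_H])
next
  case (Suc j)
  define m :: complex where "m = of_nat (Suc j)"
  have m_Suc: "of_nat (Suc (Suc j)) = m + 1"
    by (simp add: m_def)
  then have "m + 1 \<noteq> 0"
    by (metis of_nat_neq_0)
  have Y_Suc: "Y (Suc (Suc j)) z = sc (1 / (m + 1)) (H (Y (Suc j) z) + sc (m + 1) (Y (Suc j) z))"
    by (simp only: Y.simps(2) [of "Suc j"] m_Suc)
  have "X (Y (Suc (Suc j)) z)
      = sc (1 / (m + 1)) (sc (- eta) (H (Y j z)) + sc eta (Y j z) - sc eta (Y (Suc j) z)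
          + sc (m + 1) (sc (- eta) (Y j z)))"
    by (simp add: Y_Suc Suc X_H_swap pair.linear_add [OF linear_X] pair.linear_scale [OF linear_X]
        pair.linear_neg [OF linear_H] pair.linear_scale [OF linear_H] algebra_simps)
  also have "\<dots> = sc (1 / (m + 1)) (sc (- eta) (sc (m + 1) (Y (Suc j) z)))"
    by (simp add: H_Y m_def [symmetric] algebra_simps del: of_nat_Suc)
  also have "\<dots> = sc (- eta) (Y (Suc j) z)"
    using \<open>m + 1 \<noteq> 0\<close> by simp
  finally show ?case .
qed

lemma X_pow_Y:
  assumes "X z = 0"
  shows "(X ^^ i) (Y (i + j) z) = sc ((- eta) ^ i) (Y j z)"
proof (induction i arbitrary: j)
  case (Suc i)
  have "(X ^^ Suc i) (Y (Suc i + j) z) = X ((X ^^ i) (Y (i + Suc j) z))"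
    by simp
  also have "\<dots> = X (sc ((- eta) ^ i) (Y (Suc j) z))"
    by (simp only: Suc.IH)
  also have "\<dots> = sc ((- eta) ^ Suc i) (Y j z)"
    by (simp only: pair.linear_scale [OF linear_X] X_Y [OF assms] scale_scale power_Suc mult.commute)
  finally show ?case .
qed simp

lemma X_pow_Y_eq_0:
  assumes "X z = 0" and "j \<le> k"
  shows "(X ^^ Suc k) (Y j z) = 0"
proof -
  have "Suc k = (k - j) + (Suc 0 + j)"
    using \<open>j \<le> k\<close> by simp
  then have "(X ^^ Suc k) (Y j z) = (X ^^ (k - j)) (X ((X ^^ j) (Y (j + 0) z)))"
    by (simp only: funpow_add o_apply funpow_Suc_right funpow_0 add_0_right)
  also have "\<dots> = 0"
    by (simp only: X_pow_Y [OF assms(1)] pair.linear_scale [OF linear_X] assms(1) scale_zero_right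
        pair.linear_0 [OF linear_funpow [OF linear_X]] Y.simps(1))
  finally show ?thesis .
qed

lemma X_Zw: "X (Zw c) = 0"
proof -
  have "E (Zw c) = poly_op sc c \<Omega> (E w)"
    unfolding Zw_def
    by (rule poly_op_commute [OF linear_E linear_Omega linear_Omega]) (simp add: Omega_E_commute)
  then show ?thesis
    by (simp add: X_def Whittaker_vector Zw_def
        pair.linear_scale [OF linear_poly_op [OF linear_Omega]])
qed

lemma Zw_add: "Zw (c + d) = Zw c + Zw d"
  by (simp add: Zw_def poly_op_add)

lemma Zw_smult: "Zw (smult a c) = sc a (Zw c)"
  by (simp add: Zw_def poly_op_smult)

lemma Zw_mult: "Zw (a * c) = poly_op sc a \<Omega> (Zw c)"
  by (simp add: Zw_def poly_op_mult linear_Omega)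

lemma Y_Zw_in_W: "j \<le> k \<Longrightarrow> Y j (Zw c) \<in> W k"
  unfolding W_def by (rule span_base) auto

lemma Zw_in_W: "Zw c \<in> W k"
  using Y_Zw_in_W [of 0 k c] by simp

lemma W_mono: "k \<le> l \<Longrightarrow> W k \<subseteq> W l"
  unfolding W_def by (rule span_mono) auto

lemma X_pow_W:
  assumes "v \<in> W k"
  shows "(X ^^ Suc k) v = 0"
  using X_pow_Y_eq_0 [OF X_Zw]
  by (intro pair.linear_eq_0_on_span [OF linear_funpow [OF linear_X] _ assms [unfolded W_def]])
    blast

lemma W_0: "v \<in> W 0 \<Longrightarrow> \<exists>c. v = Zw c"
  unfolding W_def
proof (induction rule: span_induct_alt)
  case base
  have "0 = Zw 0" by (simp add: Zw_def)
  then show ?case ..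
next
  case (step a x y)
  then obtain d c where "x = Zw d" and "y = Zw c" by auto
  then have "sc a x + y = Zw (smult a d + c)" by (simp add: Zw_add Zw_smult)
  then show ?case ..
qed

lemma W_Suc: "v \<in> W (Suc m) \<Longrightarrow> \<exists>c. v - Y (Suc m) (Zw c) \<in> W m"
  unfolding W_def [of "Suc m"]
proof (induction rule: span_induct_alt)
  case base
  have "0 - Y (Suc m) (Zw 0) \<in> W m"
    by (simp add: Zw_def pair.linear_0 [OF linear_Y] W_def span_zero)
  then show ?case ..
next
  case (step a x y)
  then obtain j d where x: "x = Y j (Zw d)" and "j \<le> Suc m" by auto
  from step obtain c where c: "y - Y (Suc m) (Zw c) \<in> W m" by auto
  show ?case
  proof (cases "j = Suc m")
    case True
    have "sc a x + y - Y (Suc m) (Zw (smult a d + c)) = y - Y (Suc m) (Zw c)"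
      by (simp add: x True Zw_add Zw_smult
          pair.linear_add [OF linear_Y] pair.linear_scale [OF linear_Y])
    with c show ?thesis by metis
  next
    case False
    then have "x \<in> W m"
      using x \<open>j \<le> Suc m\<close> by (simp add: Y_Zw_in_W)
    then have "sc a x + (y - Y (Suc m) (Zw c)) \<in> W m"
      using c by (simp add: W_def span_add span_scale)
    then show ?thesis
      by (metis add_diff_eq)
  qed
qed

lemma subspace_W_Union: "subspace (\<Union>k. W k)"
proof (rule subspaceI)
  show "0 \<in> (\<Union>k. W k)"
    by (auto simp: W_def span_zero)
next
  fix x y assume "x \<in> (\<Union>k. W k)" and "y \<in> (\<Union>k. W k)"
  then obtain k l where "x \<in> W k" and "y \<in> W l" by blast
  then have "x \<in> W (max k l)" and "y \<in> W (max k l)"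
    using W_mono [of k "max k l"] W_mono [of l "max k l"] by auto
  then show "x + y \<in> (\<Union>k. W k)"
    by (auto simp: W_def intro: span_add)
next
  fix c x assume "x \<in> (\<Union>k. W k)"
  then show "sc c x \<in> (\<Union>k. W k)"
    by (auto simp: W_def intro: span_scale)
qed

lemma E_W:
  assumes "v \<in> W k"
  shows "E v \<in> W k"
proof (rule span_linear_into_subspace [OF linear_E _ _ assms [unfolded W_def]])
  fix x assume "x \<in> {Y j (Zw c) | j c. j \<le> k}"
  then obtain j c where x: "x = Y j (Zw c)" and "j \<le> k" by blast
  have "X x \<in> W k"
  proof (cases j)
    case 0
    then show ?thesis by (simp add: x X_Zw W_def span_zero)
  next
    case (Suc i)
    then show ?thesis
      using Y_Zw_in_W [of i k c] \<open>j \<le> k\<close>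
      by (simp add: x X_Y [OF X_Zw] W_def span_neg span_scale)
  qed
  moreover have "x \<in> W k"
    using x \<open>j \<le> k\<close> by (simp add: Y_Zw_in_W)
  moreover have "E x = X x + sc eta x"
    by (simp add: X_def)
  ultimately show "E x \<in> W k"
    by (simp add: W_def span_add span_scale)
qed (simp add: W_def)

lemma H_W:
  assumes "v \<in> W k"
  shows "H v \<in> W (Suc k)"
proof (rule span_linear_into_subspace [OF linear_H _ _ assms [unfolded W_def]])
  fix x assume "x \<in> {Y j (Zw c) | j c. j \<le> k}"
  then obtain j c where "x = Y j (Zw c)" and "j \<le> k" by blast
  then show "H x \<in> W (Suc k)"
    using Y_Zw_in_W [of "Suc j" "Suc k" c] Y_Zw_in_W [of j "Suc k" c]
    by (simp add: H_Y W_def span_diff span_scale)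
qed (simp add: W_def)

lemma H_W_Union: "v \<in> (\<Union>k. W k) \<Longrightarrow> H v \<in> (\<Union>k. W k)"
  using H_W by blast

lemma F_Zw: "F (Zw c) \<in> (\<Union>k. W k)"
proof -
  let ?u1 = "pcompose u [:1, 1:]"
  (* Since w is a Whittaker vector and eta \<noteq> 0, the definition of Omega solves for F w. *)
  have F_w: "F w = sc (1 / (2 * eta)) (\<Omega> w - poly_op sc ?u1 H w)"
    using eta_nonzero by (simp add: Omega_eq Whittaker_vector pair.linear_scale [OF linear_F])
  have "F (Zw c) = poly_op sc c \<Omega> (F w)"
    unfolding Zw_def
    by (rule poly_op_commute [OF linear_F linear_Omega linear_Omega]) (simp add: Omega_F_commute)
  also have "\<dots> = sc (1 / (2 * eta)) (Zw (c * [:0, 1:]) - poly_op sc ?u1 H (Zw c))"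
  proof -
    have "Zw (c * [:0, 1:]) = poly_op sc c \<Omega> (\<Omega> w)"
      unfolding Zw_def by (simp only: poly_op_mult [OF linear_Omega] poly_op_var [OF linear_Omega])
    moreover have "poly_op sc c \<Omega> (poly_op sc ?u1 H w) = poly_op sc ?u1 H (Zw c)"
      unfolding Zw_def
      by (rule poly_op_commute [OF linear_poly_op [OF linear_Omega] linear_H linear_H])
        (simp add: poly_op_commute [OF linear_H linear_Omega linear_Omega] Omega_H_commute)
    ultimately show ?thesis
      by (simp add: F_w pair.linear_scale [OF linear_poly_op [OF linear_Omega]]
          pair.linear_diff [OF linear_poly_op [OF linear_Omega]] Zw_def)
  qed
  also have "\<dots> \<in> (\<Union>k. W k)"
  proof -
    have Zw_Union: "Zw d \<in> (\<Union>k. W k)" for d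
      using Zw_in_W by blast
    have "poly_op sc ?u1 H (Zw c) \<in> (\<Union>k. W k)"
      using subspace_W_Union linear_H H_W_Union Zw_Union by (rule poly_op_in_subspace)
    with Zw_Union show ?thesis
      by (intro subspace_scale subspace_diff subspace_W_Union)
  qed
  finally show ?thesis .
qed

lemma F_Y_Zw: "F (Y j (Zw c)) \<in> (\<Union>k. W k)"
proof (induction j)
  case (Suc j)
  let ?a = "F (Y j (Zw c))"
  have "F (Y (Suc j) (Zw c)) = sc (1 / of_nat (Suc j)) (H ?a + ?a + sc (of_nat (Suc j)) ?a)"
    by (simp only: Y.simps pair.linear_add [OF linear_F] pair.linear_scale [OF linear_F] F_H_swap)
  also have "\<dots> \<in> (\<Union>k. W k)"
    using Suc H_W_Union [OF Suc] by (intro subspace_scale subspace_add subspace_W_Union)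
  finally show ?case .
qed (simp only: Y.simps(1) F_Zw)

lemma F_W:
  assumes "v \<in> W k"
  shows "F v \<in> (\<Union>k. W k)"
proof (rule span_linear_into_subspace [OF linear_F subspace_W_Union _ assms [unfolded W_def]])
  fix x assume "x \<in> {Y j (Zw c) | j c. j \<le> k}"
  then show "F x \<in> (\<Union>k. W k)"
    using F_Y_Zw by blast
qed

lemma W_exhaustive: "\<exists>k. v \<in> W k"
proof -
  have "is_submodule sc E F H (\<Union>k. W k)"
    unfolding is_submodule_def
  proof (intro conjI subspace_W_Union image_subsetI)
    fix x assume "x \<in> (\<Union>k. W k)"
    then obtain k where "x \<in> W k" by blast
    show "E x \<in> (\<Union>k. W k)"
      using E_W [OF \<open>x \<in> W k\<close>] by blast
    show "F x \<in> (\<Union>k. W k)"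
      using F_W [OF \<open>x \<in> W k\<close>] .
    show "H x \<in> (\<Union>k. W k)"
      using H_W [OF \<open>x \<in> W k\<close>] by blast
  qed
  moreover have "w \<in> (\<Union>k. W k)"
    using Zw_in_W [of 1 0] by (auto simp: Zw_def)
  ultimately have "gen_submodule sc E F H {w} \<subseteq> (\<Union>k. W k)"
    by (simp add: gen_submodule_least)
  then show ?thesis
    using cyclic by auto
qed

lemma submodule_X: "is_submodule sc E F H S \<Longrightarrow> x \<in> S \<Longrightarrow> X x \<in> S"
  by (simp add: X_def submodule_closed submodule_subspace subspace_diff subspace_scale)

lemma submodule_X_pow: "is_submodule sc E F H S \<Longrightarrow> x \<in> S \<Longrightarrow> (X ^^ i) x \<in> S"
  by (induction i) (simp_all add: submodule_X)

lemma submodule_Y: "is_submodule sc E F H S \<Longrightarrow> x \<in> S \<Longrightarrow> Y j x \<in> S"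
  by (induction j)
    (simp_all add: Y.simps submodule_closed submodule_subspace subspace_add subspace_scale)

lemma Whittaker_reduction:
  assumes U: "is_submodule sc E F H U" and "v \<in> W k" and "X v \<in> U"
  shows "\<exists>c. v - Zw c \<in> U"
  using assms(2,3)
proof (induction k arbitrary: v)
  case 0
  then obtain c where "v = Zw c"
    using W_0 by blast
  then have "v - Zw c \<in> U"
    using subspace_0 [OF submodule_subspace [OF U]] by simp
  then show ?case ..
next
  case (Suc m)
  then obtain c where r: "v - Y (Suc m) (Zw c) \<in> W m"
    using W_Suc by blast
  define r where "r = v - Y (Suc m) (Zw c)"
  have "(X ^^ Suc m) v = (X ^^ Suc m) (Y (Suc m) (Zw c)) + (X ^^ Suc m) r"
    by (simp only: r_def flip: pair.linear_add [OF linear_funpow [OF linear_X]]) simp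
  also have "\<dots> = sc ((- eta) ^ Suc m) (Zw c)"
    using X_pow_Y [OF X_Zw, of "Suc m" 0 c] X_pow_W [OF r] by (simp add: r_def del: funpow.simps)
  finally have "sc ((- eta) ^ Suc m) (Zw c) \<in> U"
    using submodule_X_pow [OF U Suc.prems(2), of m] by (simp only: funpow_Suc_right o_apply)
  then have "sc (1 / (- eta) ^ Suc m) (sc ((- eta) ^ Suc m) (Zw c)) \<in> U"
    by (rule subspace_scale [OF submodule_subspace [OF U]])
  then have "Y (Suc m) (Zw c) \<in> U"
    using eta_nonzero by (simp add: submodule_Y [OF U])
  then have "X r \<in> U"
    using Suc.prems(2) submodule_X [OF U]
    by (simp add: r_def pair.linear_diff [OF linear_X] subspace_diff [OF submodule_subspace [OF U]])
  then obtain d where "r - Zw d \<in> U"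
    using Suc.IH [OF r [folded r_def]] by blast
  with \<open>Y (Suc m) (Zw c) \<in> U\<close> have "Y (Suc m) (Zw c) + (r - Zw d) \<in> U"
    by (rule subspace_add [OF submodule_subspace [OF U]])
  then show ?case
    by (auto simp: r_def)
qed

lemma submodule_Zw_ideal:
  assumes "irreducible p" and annihilator: "\<And>v. poly_op sc (p ^ n) \<Omega> v = 0"
    and V': "is_submodule sc E F H V'"
  shows "\<exists>i\<le>n. {q. Zw q \<in> V'} = {q. p ^ i dvd q}"
proof (rule ideal_containing_prime_power [OF _ _ \<open>irreducible p\<close>])
  show "a + b \<in> {q. Zw q \<in> V'}" if "a \<in> {q. Zw q \<in> V'}" and "b \<in> {q. Zw q \<in> V'}" for a b
    using that by (simp add: Zw_add subspace_add submodule_subspace [OF V'])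
  show "a * b \<in> {q. Zw q \<in> V'}" if "b \<in> {q. Zw q \<in> V'}" for a b
    using that by (simp add: Zw_mult submodule_poly_Omega [OF V'])
  show "p ^ n \<in> {q. Zw q \<in> V'}"
    by (simp add: Zw_def annihilator subspace_0 submodule_subspace [OF V'])
qed

lemma submodule_eq_gen_submodule_Zw:
  assumes V': "is_submodule sc E F H V'" and I: "\<And>q. Zw q \<in> V' \<longleftrightarrow> g dvd q"
  shows "V' = gen_submodule sc E F H {Zw g}"
proof -
  define U where "U = gen_submodule sc E F H {Zw g}"
  have U: "is_submodule sc E F H U"
    unfolding U_def by (rule submodule_gen_submodule)
  have "U \<subseteq> V'"
    unfolding U_def using I by (intro gen_submodule_least [OF V']) auto
  have Zw_U: "Zw c \<in> U" if "Zw c \<in> V'" for c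
  proof -
    have "g dvd c"
      using that I [of c] by simp
    then obtain d where "c = g * d" ..
    then have "Zw c = poly_op sc d \<Omega> (Zw g)"
      by (simp add: Zw_mult mult.commute)
    moreover have "Zw g \<in> U"
      unfolding U_def by (rule subsetD [OF gen_submodule_superset]) simp
    ultimately show ?thesis
      by (simp add: submodule_poly_Omega [OF U])
  qed
  have lift: "v \<in> U" if "v \<in> V'" and "X v \<in> U" for v
  proof -
    obtain k where "v \<in> W k"
      using W_exhaustive by blast
    then obtain c where c: "v - Zw c \<in> U"
      using Whittaker_reduction [OF U] \<open>X v \<in> U\<close> by blast
    then have "v - (v - Zw c) \<in> V'"
      using subspace_diff [OF submodule_subspace [OF V'] \<open>v \<in> V'\<close>] \<open>U \<subseteq> V'\<close> by blast
    then have "Zw c \<in> U"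
      by (simp add: Zw_U)
    then have "(v - Zw c) + Zw c \<in> U"
      by (rule subspace_add [OF submodule_subspace [OF U] c])
    then show ?thesis
      by simp
  qed
  have descent: "v \<in> U" if "v \<in> V'" and "(X ^^ N) v \<in> U" for N v
    using that
  proof (induction N arbitrary: v)
    case (Suc N)
    then show ?case
      using lift submodule_X [OF V'] by (simp add: funpow_Suc_right del: funpow.simps)
  qed simp
  have "V' \<subseteq> U"
  proof
    fix v assume "v \<in> V'"
    obtain k where "v \<in> W k"
      using W_exhaustive by blast
    then have "(X ^^ Suc k) v \<in> U"
      using X_pow_W subspace_0 [OF submodule_subspace [OF U]] by (simp del: funpow.simps)
    with \<open>v \<in> V'\<close> show "v \<in> U"
      by (rule descent)
  qed
  with \<open>U \<subseteq> V'\<close> show ?thesis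
    unfolding U_def by blast
qed

theorem submodule_eq_gen_submodule_power:
  assumes "irreducible p" and "\<And>v. poly_op sc (p ^ n) \<Omega> v = 0"
    and "is_submodule sc E F H V'"
  shows "\<exists>i\<le>n. V' = gen_submodule sc E F H {Zw (p ^ i)}"
proof -
  obtain i where "i \<le> n" and "{q. Zw q \<in> V'} = {q. p ^ i dvd q}"
    using submodule_Zw_ideal [OF assms] by blast
  then have "V' = gen_submodule sc E F H {Zw (p ^ i)}"
    by (intro submodule_eq_gen_submodule_Zw [OF assms(3)]) (simp add: set_eq_iff)
  with \<open>i \<le> n\<close> show ?thesis
    by blast
qed

end

theorem mainTheorem13:
  fixes sc :: "complex \<Rightarrow> 'v::ab_group_add \<Rightarrow> 'v"
    and fp u p :: "complex poly"
    and E F H :: "'v \<Rightarrow> 'v"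
    and eta :: complex and w :: 'v and n :: nat
  assumes u_def: "fp = smult (1/2) (pcompose u [:1, 1:] - u)"
    and Rmod: "is_R_module sc fp E F H"
    and eta_nz: "eta \<noteq> 0"
    and whit: "E w = sc eta w"
    and cyclic: "gen_submodule sc E F H {w} = UNIV"
    and indec: "indecomposable sc E F H TYPE('v)"
    and irr: "irreducible p"
    and n_pos: "n \<ge> 1"
    and ZV: "\<forall>q. (\<forall>v. poly_op sc q (Omega_op sc u E F H) v = 0) \<longleftrightarrow> p ^ n dvd q"
  shows "\<forall>V'. is_submodule sc E F H V' \<longrightarrow>
           (\<exists>i\<le>n. V' = gen_submodule sc E F H {poly_op sc (p ^ i) (Omega_op sc u E F H) w})"
proof (intro allI impI)
  fix V' assume "is_submodule sc E F H V'"
  interpret Whittaker_module sc fp E F H u eta w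
    using Rmod u_def eta_nz whit cyclic
    by (simp add: Whittaker_module_def Whittaker_module_axioms_def R_module_Casimir_def
        R_module_Casimir_axioms_def R_module_def)
  have "\<And>v. poly_op sc (p ^ n) (Omega_op sc u E F H) v = 0"
    using ZV [rule_format, of "p ^ n"] by simp
  then show "\<exists>i\<le>n. V' = gen_submodule sc E F H {poly_op sc (p ^ i) (Omega_op sc u E F H) w}"
    using submodule_eq_gen_submodule_power [OF irr _ \<open>is_submodule sc E F H V'\<close>]
    by (simp add: Zw_def)
qed

end
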